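(* Let $W$ be the affine Weyl group of type $C_n^{(1)}$ and let $w=t_q\overline w\in W$. Then $\mathcal{L}_{\Lambda_0}(\sigma_nw)=\mathcal{L}_{\Lambda_0}(w)$.
   Context: Affine Kac–Moody setting of type $C_n^{(1)}$ ($n\ge2$): $\mathfrak h^*$ contains simple roots $\alpha_0,\dots,\alpha_n$, marks $(a_0,\dots,a_n)=(1,2,\dots,2,1)$, $(a_0^\vee,\dots,a_n^\vee)=(1,\dots,1)$, null root $\delta=\sum a_i\alpha_i$, canonical central element $c=\sum a_i^\vee\alpha_i^\vee$, Coxeter number $h=2n$, affine fundamental weight $\Lambda_0$, and $\rho^\vee\in\mathfrak h$ with $\langle\alpha_i,\rho^\vee\rangle=1$ for all $i$. The finite part $V_0=\mathbb{R}^n$ with standard dot product, $\alpha_i=\frac1{\sqrt2}(\varepsilon_i-\varepsilon_{i+1})$ ($1\le i\le n-1$), $\alpha_n=\sqrt2\varepsilon_n$. For $x\in V_0$, $t_x(v)=v+\langle v,c\rangle x-((v|x)+\frac12|x|^2\langle v,c\rangle)\delta$. $W_0=\langle s_1,\dots,s_n\rangle$, $M=\sqrt2\mathbb{Z}\varepsilon_1\oplus\dots\oplus\sqrt2\mathbb{Z}\varepsilon_n$, $W=T(M)\rtimes W_0$, each $w\in W$ written uniquely $w=t_q\overline w$. $\omega_n=\frac{\sqrt2}{2}(\varepsilon_1+\dots+\varepsilon_n)$, and $\sigma_n=t_{\omega_n}w_{0,n}w_0$, where $w_0$ is the longest element of $W_0$ and $w_{0,n}$ the longest element of $\langle s_1,\dots,s_{n-1}\rangle$.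 $\mathcal{L}_{\Lambda_0}(g)=\langle\Lambda_0-g\Lambda_0,\rho^\vee\rangle$ for $g\in GL(\mathfrak h^* )$. *)

theory Defs
  imports Complex_Main
begin

text \<open>The finite part V_0 = R^n is modelled as functions nat => real, where
coordinate j (1 <= j <= n) is the coefficient of epsilon_j; vectors of V_0 are
those vanishing outside {1..n}.  An element (x, a, b) of the type hstar stands
for x + a Lambda_0 + b delta.  Thus the pairing with c is the middle coordinate.\<close>

type_synonym vec0 = "nat \<Rightarrow> real"
type_synonym hstar = "vec0 \<times> real \<times> real"

definition eps :: "nat \<Rightarrow> vec0" where
  "eps i = (\<lambda>j. if j = i then 1 else 0)"

definition vadd :: "vec0 \<Rightarrow> vec0 \<Rightarrow> vec0" where
  "vadd x y = (\<lambda>j. x j + y j)"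

definition vscale :: "real \<Rightarrow> vec0 \<Rightarrow> vec0" where
  "vscale c x = (\<lambda>j. c * x j)"

definition vsub :: "vec0 \<Rightarrow> vec0 \<Rightarrow> vec0" where
  "vsub x y = (\<lambda>j. x j - y j)"

definition dot :: "nat \<Rightarrow> vec0 \<Rightarrow> vec0 \<Rightarrow> real" where
  "dot n x y = (\<Sum>j=1..n. x j * y j)"

definition froot :: "nat \<Rightarrow> nat \<Rightarrow> vec0" where
  "froot n i = (if i < n then vscale (1 / sqrt 2) (vsub (eps i) (eps (i + 1)))
                else vscale (sqrt 2) (eps n))"

definition srefl :: "nat \<Rightarrow> nat \<Rightarrow> vec0 \<Rightarrow> vec0" where
  "srefl n i v = vsub v (vscale (2 * dot n v (froot n i) / dot n (froot n i) (froot n i)) (froot n i))"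

definition wordprod :: "nat \<Rightarrow> nat list \<Rightarrow> vec0 \<Rightarrow> vec0" where
  "wordprod n ws = foldr (\<lambda>i g. srefl n i \<circ> g) ws id"

definition gen :: "nat \<Rightarrow> nat set \<Rightarrow> (vec0 \<Rightarrow> vec0) set" where
  "gen n I = {wordprod n ws | ws. set ws \<subseteq> I}"

definition wlen :: "nat \<Rightarrow> nat set \<Rightarrow> (vec0 \<Rightarrow> vec0) \<Rightarrow> nat" where
  "wlen n I w = (LEAST k. \<exists>ws. set ws \<subseteq> I \<and> length ws = k \<and> wordprod n ws = w)"

definition longest :: "nat \<Rightarrow> nat set \<Rightarrow> vec0 \<Rightarrow> vec0" where
  "longest n I = (THE w. w \<in> gen n I \<and> (\<forall>u \<in> gen n I. wlen n I u \<le> wlen n I w))"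

definition W0 :: "nat \<Rightarrow> (vec0 \<Rightarrow> vec0) set" where
  "W0 n = gen n {1..n}"

definition w0 :: "nat \<Rightarrow> vec0 \<Rightarrow> vec0" where
  "w0 n = longest n {1..n}"

definition w0n :: "nat \<Rightarrow> vec0 \<Rightarrow> vec0" where
  "w0n n = longest n {1..n-1}"

definition lift :: "(vec0 \<Rightarrow> vec0) \<Rightarrow> hstar \<Rightarrow> hstar" where
  "lift g v = (case v of (x, a, b) \<Rightarrow> (g x, a, b))"

definition transl :: "nat \<Rightarrow> vec0 \<Rightarrow> hstar \<Rightarrow> hstar" where
  "transl n q v = (case v of (x, a, b) \<Rightarrow>
      (vadd x (vscale a q), a, b - (dot n x q + (1/2) * dot n q q * a)))"

definition Mlat :: "nat \<Rightarrow> vec0 set" where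
  "Mlat n = {q. (\<forall>j. j \<notin> {1..n} \<longrightarrow> q j = 0) \<and>
                (\<forall>j \<in> {1..n}. \<exists>k::int. q j = sqrt 2 * of_int k)}"

definition Waff :: "nat \<Rightarrow> (hstar \<Rightarrow> hstar) set" where
  "Waff n = {transl n q \<circ> lift u | q u. q \<in> Mlat n \<and> u \<in> W0 n}"

definition omega_n :: "nat \<Rightarrow> vec0" where
  "omega_n n = (\<lambda>j. if j \<in> {1..n} then sqrt 2 / 2 else 0)"

definition sigma_n :: "nat \<Rightarrow> hstar \<Rightarrow> hstar" where
  "sigma_n n = transl n (omega_n n) \<circ> lift (w0n n) \<circ> lift (w0 n)"

definition hadd :: "hstar \<Rightarrow> hstar \<Rightarrow> hstar" where
  "hadd u v = (case u of (x, a, b) \<Rightarrow> case v of (y, c, d) \<Rightarrow> (vadd x y, a + c, b + d))"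

definition hscale :: "real \<Rightarrow> hstar \<Rightarrow> hstar" where
  "hscale t u = (case u of (x, a, b) \<Rightarrow> (vscale t x, t * a, t * b))"

definition hsub :: "hstar \<Rightarrow> hstar \<Rightarrow> hstar" where
  "hsub u v = (case u of (x, a, b) \<Rightarrow> case v of (y, c, d) \<Rightarrow> (vsub x y, a - c, b - d))"

definition Lambda0 :: hstar where "Lambda0 = ((\<lambda>_. 0), 1, 0)"

definition delta :: hstar where "delta = ((\<lambda>_. 0), 0, 1)"

definition marks :: "nat \<Rightarrow> nat \<Rightarrow> real" where
  "marks n i = (if i = 0 \<or> i = n then 1 else 2)"

text \<open>Affine simple roots in h*: alpha_i for i >= 1 from V_0, and alpha_0 determined
by delta = sum a_i alpha_i.\<close>
definition aroot :: "nat \<Rightarrow> nat \<Rightarrow> hstar" where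
  "aroot n i = (if i = 0
     then ((\<lambda>j. - (\<Sum>k=1..n. marks n k * froot n k j)), 0, 1)
     else (froot n i, 0, 0))"

text \<open>L_{Lambda_0}(g) = <Lambda_0 - g Lambda_0, rho^vee>, where the pairing with
rho^vee is given as a linear functional rho on h*.\<close>
definition LL :: "(hstar \<Rightarrow> real) \<Rightarrow> (hstar \<Rightarrow> hstar) \<Rightarrow> real" where
  "LL rho g = rho (hsub Lambda0 (g Lambda0))"

end

theory Submission
  imports Defs "HOL-Combinatorics.Transposition"
begin

(* For w = t_q u with u in W_0 one has w Lambda_0 = Lambda_0 + q - |q|^2/2 delta, hence
   L(w) = h/2 |q|^2 - (q | rho) = n |q|^2 - (q | rho), where rho in V_0 represents rho^vee on V_0
   and h = <delta, rho^vee> = 2n.  Moreover sigma_n w = t_q' u' with q' = g q + omega_n and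
   g = w_{0,n} w_0.  Since w_0 = -1 and w_{0,n} reverses the coordinates, g rho = rho - 2n omega_n,
   so q |-> g q + omega_n is an isometry fixing rho/2n and therefore preserves
   n |q|^2 - (q | rho) = n |q - rho/2n|^2 - |rho|^2/4n.

   The substantial point is identifying w_0 and w_{0,n}, which are defined as longest elements:
   at a regular dominant vector v the length of w equals the number of positive roots that are
   negative at w v, so the longest element is the one sending v into the antidominant chamber. *)

section \<open>Simple reflections as coordinate maps\<close>

abbreviation swap_adj :: "nat \<Rightarrow> nat \<Rightarrow> nat" where
  "swap_adj k \<equiv> Transposition.transpose k (Suc k)"

lemma dot_eps: "i \<in> {1..n} \<Longrightarrow> dot n x (eps i) = x i"
  unfolding dot_def eps_def by (simp add: if_distrib cong: if_cong)

lemma dot_vsub_right: "dot n x (vsub y z) = dot n x y - dot n x z"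
  unfolding dot_def vsub_def by (simp add: algebra_simps sum_subtractf)

lemma dot_vscale_right: "dot n x (vscale c y) = c * dot n x y"
  unfolding dot_def vscale_def by (simp add: algebra_simps sum_distrib_left)

lemma dot_vadd_left: "dot n (vadd x y) z = dot n x z + dot n y z"
  unfolding dot_def vadd_def by (simp add: algebra_simps sum.distrib)

lemma dot_vadd_right: "dot n x (vadd y z) = dot n x y + dot n x z"
  unfolding dot_def vadd_def by (simp add: algebra_simps sum.distrib)

lemma dot_commute: "dot n x y = dot n y x"
  unfolding dot_def by (simp add: mult.commute)

lemma srefl_eq_swap:
  assumes "1 \<le> k" "k < n"
  shows "srefl n k x = x \<circ> swap_adj k"
proof
  fix j
  have root: "froot n k = vscale (1 / sqrt 2) (vsub (eps k) (eps (Suc k)))"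
    using assms by (simp add: froot_def)
  have pair: "dot n x (froot n k) = (x k - x (Suc k)) / sqrt 2"
    using assms by (simp add: root dot_vscale_right dot_vsub_right dot_eps)
  have norm: "dot n (froot n k) (froot n k) = 1"
    using assms by (simp add: root dot_vscale_right dot_vsub_right dot_eps)
      (simp add: vscale_def vsub_def eps_def real_div_sqrt)
  show "srefl n k x j = (x \<circ> swap_adj k) j"
    unfolding srefl_def pair norm
    by (auto simp: root vscale_def vsub_def eps_def transpose_def field_simps)
qed

lemma srefl_eq_negate:
  assumes "1 \<le> n"
  shows "srefl n n x = x(n := - x n)"
proof
  fix j
  have root: "froot n n = vscale (sqrt 2) (eps n)" by (simp add: froot_def)
  have pair: "dot n x (froot n n) = sqrt 2 * x n"
    using assms by (simp add: root dot_vscale_right dot_eps)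
  have norm: "dot n (froot n n) (froot n n) = 2"
    using assms by (simp add: root dot_vscale_right dot_eps) (simp add: vscale_def eps_def)
  show "srefl n n x j = (x(n := - x n)) j"
    unfolding srefl_def pair norm by (auto simp: root vscale_def vsub_def eps_def)
qed

lemma srefl_involutive: "k \<in> {1..n} \<Longrightarrow> srefl n k (srefl n k x) = x"
  by (cases "k < n") (auto simp: srefl_eq_swap srefl_eq_negate comp_def)

lemma wordprod_Nil: "wordprod n [] = id"
  by (simp add: wordprod_def)

lemma wordprod_Cons: "wordprod n (k # ws) = srefl n k \<circ> wordprod n ws"
  by (simp add: wordprod_def)

lemma gen_iff: "w \<in> gen n I \<longleftrightarrow> (\<exists>ws. set ws \<subseteq> I \<and> w = wordprod n ws)"
  unfolding gen_def by auto

lemma id_in_gen: "id \<in> gen n I"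
  unfolding gen_iff by (rule exI[of _ "[]"]) (simp add: wordprod_Nil)

lemma srefl_comp_in_gen: "k \<in> I \<Longrightarrow> w \<in> gen n I \<Longrightarrow> srefl n k \<circ> w \<in> gen n I"
  unfolding gen_iff by (metis insert_subset list.simps(15) wordprod_Cons)

section \<open>Signed permutations\<close>

definition signed_perm :: "nat \<Rightarrow> (nat \<Rightarrow> real) \<Rightarrow> (nat \<Rightarrow> nat) \<Rightarrow> vec0 \<Rightarrow> vec0" where
  "signed_perm n \<epsilon> \<pi> x = (\<lambda>j. if j \<in> {1..n} then \<epsilon> j * x (\<pi> j) else x j)"

(* The sign set E is {-1, 1} for W_0 and {1} for the subgroup generated by s_1, ..., s_(n-1). *)
definition signed_perms :: "nat \<Rightarrow> real set \<Rightarrow> (vec0 \<Rightarrow> vec0) set" where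
  "signed_perms n E = {signed_perm n \<epsilon> \<pi> | \<epsilon> \<pi>. bij_betw \<pi> {1..n} {1..n} \<and> range \<epsilon> \<subseteq> E}"

lemma signed_permsE:
  assumes "u \<in> signed_perms n E"
  obtains \<epsilon> \<pi> where "bij_betw \<pi> {1..n} {1..n}" "range \<epsilon> \<subseteq> E" "u = signed_perm n \<epsilon> \<pi>"
  using assms unfolding signed_perms_def by blast

lemma swap_comp_signed_perm:
  assumes "1 \<le> k" "k < n"
  shows "signed_perm n \<epsilon> \<pi> x \<circ> swap_adj k = signed_perm n (\<epsilon> \<circ> swap_adj k) (\<pi> \<circ> swap_adj k) x"
  using assms by (auto simp: signed_perm_def transpose_def fun_eq_iff)

lemma negate_signed_perm:
  assumes "1 \<le> n"
  shows "(signed_perm n \<epsilon> \<pi> x)(n := - signed_perm n \<epsilon> \<pi> x n) = signed_perm n (\<epsilon>(n := - \<epsilon> n)) \<pi> x"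
  using assms by (auto simp: signed_perm_def fun_eq_iff)

lemma srefl_comp_signed_perms:
  assumes "u \<in> signed_perms n E" "k \<in> {1..n}" "k = n \<Longrightarrow> uminus ` E \<subseteq> E"
  shows "srefl n k \<circ> u \<in> signed_perms n E"
proof -
  obtain \<epsilon> \<pi> where perm: "bij_betw \<pi> {1..n} {1..n}" and signs: "range \<epsilon> \<subseteq> E"
    and u: "u = signed_perm n \<epsilon> \<pi>"
    using assms(1) by (rule signed_permsE)
  show ?thesis
  proof (cases "k < n")
    case True
    have "bij_betw (\<pi> \<circ> swap_adj k) {1..n} {1..n}"
      using perm assms(2) True by (intro bij_betw_trans[OF _ perm]) (auto simp: bij_betw_def)
    moreover have "range (\<epsilon> \<circ> swap_adj k) \<subseteq> E" using signs by auto
    moreover have "srefl n k \<circ> u = signed_perm n (\<epsilon> \<circ> swap_adj k) (\<pi> \<circ> swap_adj k)"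
      using assms(2) True by (auto simp: u srefl_eq_swap swap_comp_signed_perm)
    ultimately show ?thesis unfolding signed_perms_def by blast
  next
    case False
    with assms(2) have "k = n" by simp
    then have "range (\<epsilon>(n := - \<epsilon> n)) \<subseteq> E" using signs assms(3) by auto
    moreover have "srefl n k \<circ> u = signed_perm n (\<epsilon>(n := - \<epsilon> n)) \<pi>"
      using assms(2) \<open>k = n\<close> by (auto simp: u srefl_eq_negate negate_signed_perm)
    ultimately show ?thesis using perm unfolding signed_perms_def by blast
  qed
qed

lemma gen_subset_signed_perms:
  assumes "I \<subseteq> {1..n}" "1 \<in> E" "n \<in> I \<Longrightarrow> uminus ` E \<subseteq> E"
  shows "gen n I \<subseteq> signed_perms n E"
proof
  fix w assume "w \<in> gen n I"
  then obtain ws where ws: "set ws \<subseteq> I" "w = wordprod n ws"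
    unfolding gen_iff by blast
  have "wordprod n ws \<in> signed_perms n E"
    using ws(1)
  proof (induction ws)
    case Nil
    have "id = signed_perm n (\<lambda>_. 1) id" by (simp add: signed_perm_def fun_eq_iff)
    then show ?case using assms(2) unfolding signed_perms_def wordprod_Nil by fastforce
  next
    case (Cons k ws)
    then have "k \<in> {1..n}" using assms(1) by auto
    then show ?case
      unfolding wordprod_Cons using Cons assms(3) by (intro srefl_comp_signed_perms) auto
  qed
  then show "w \<in> signed_perms n E" using ws(2) by simp
qed

lemma W0_subset_signed_perms: "W0 n \<subseteq> signed_perms n {-1, 1}"
  unfolding W0_def by (rule gen_subset_signed_perms) auto

lemma gen_A_subset_signed_perms: "gen n {1..n-1} \<subseteq> signed_perms n {1}"
  by (rule gen_subset_signed_perms) auto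

lemma signed_perm_outside: "j \<notin> {1..n} \<Longrightarrow> signed_perm n \<epsilon> \<pi> x j = x j"
  unfolding signed_perm_def by auto

lemma signed_perms_outside: "u \<in> signed_perms n E \<Longrightarrow> j \<notin> {1..n} \<Longrightarrow> u x j = x j"
  by (auto elim: signed_permsE simp: signed_perm_outside)

lemma signed_perms_zero: "u \<in> signed_perms n E \<Longrightarrow> u (\<lambda>_. 0) = (\<lambda>_. 0)"
  by (auto elim: signed_permsE simp: signed_perm_def fun_eq_iff)

lemma signed_perms_uminus: "u \<in> signed_perms n E \<Longrightarrow> u (\<lambda>j. - x j) = (\<lambda>j. - u x j)"
  by (auto elim: signed_permsE simp: signed_perm_def fun_eq_iff)

lemma dot_signed_perm:
  assumes "u \<in> signed_perms n E" "E \<subseteq> {-1, 1}"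
  shows "dot n (u x) (u y) = dot n x y"
proof -
  obtain \<epsilon> \<pi> where perm: "bij_betw \<pi> {1..n} {1..n}" and signs: "range \<epsilon> \<subseteq> E"
    and u: "u = signed_perm n \<epsilon> \<pi>"
    using assms(1) by (rule signed_permsE)
  have "\<epsilon> j * \<epsilon> j = 1" for j
    using subsetD[OF signs rangeI, of j] assms(2) by auto
  then have "dot n (u x) (u y) = (\<Sum>j=1..n. x (\<pi> j) * y (\<pi> j))"
    unfolding dot_def u signed_perm_def by (intro sum.cong) (auto simp: algebra_simps)
  also have "\<dots> = dot n x y"
    unfolding dot_def using sum.reindex_bij_betw[OF perm, of "\<lambda>i. x i * y i"] by simp
  finally show ?thesis .
qed

lemma strict_mono_self_map_shift:
  fixes \<pi> :: "nat \<Rightarrow> nat"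
  assumes "\<And>k. 1 \<le> k \<Longrightarrow> k < n \<Longrightarrow> \<pi> k < \<pi> (Suc k)" "1 \<le> i" "i \<le> j" "j \<le> n"
  shows "\<pi> i + (j - i) \<le> \<pi> j"
  using assms(3,4)
proof (induction j rule: dec_induct)
  case (step m)
  then have "\<pi> m < \<pi> (Suc m)" using assms(1,2) by auto
  then show ?case using step by simp
qed simp

lemma strict_mono_self_map_eq_id:
  fixes \<pi> :: "nat \<Rightarrow> nat"
  assumes "\<pi> ` {1..n} \<subseteq> {1..n}" "\<And>k. 1 \<le> k \<Longrightarrow> k < n \<Longrightarrow> \<pi> k < \<pi> (Suc k)" "j \<in> {1..n}"
  shows "\<pi> j = j"
proof -
  have "\<pi> 1 + (j - 1) \<le> \<pi> j"
    by (rule strict_mono_self_map_shift[where n = n]) (use assms(2,3) in auto)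
  moreover have "\<pi> j + (n - j) \<le> \<pi> n"
    by (rule strict_mono_self_map_shift[where n = n]) (use assms(2,3) in auto)
  moreover have "1 \<le> \<pi> 1" "\<pi> n \<le> n" using assms(1,3) by (auto simp: image_subset_iff)
  ultimately show ?thesis using assms(3) by auto
qed

lemma strict_antimono_self_map_eq_rev:
  fixes \<pi> :: "nat \<Rightarrow> nat"
  assumes "\<pi> ` {1..n} \<subseteq> {1..n}" "\<And>k. 1 \<le> k \<Longrightarrow> k < n \<Longrightarrow> \<pi> (Suc k) < \<pi> k" "j \<in> {1..n}"
  shows "\<pi> j = n + 1 - j"
proof -
  have "(\<lambda>j. n + 1 - \<pi> j) j = j"
  proof (rule strict_mono_self_map_eq_id[where n = n])
    show "(\<lambda>j. n + 1 - \<pi> j) ` {1..n} \<subseteq> {1..n}" using assms(1) by fastforce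
    show "n + 1 - \<pi> k < n + 1 - \<pi> (Suc k)" if "1 \<le> k" "k < n" for k
      using assms(1) assms(2)[of k] that by fastforce
  qed fact
  then show ?thesis using assms(1,3) by fastforce
qed

definition rev_coords :: "nat \<Rightarrow> vec0 \<Rightarrow> vec0" where
  "rev_coords n x = signed_perm n (\<lambda>_. 1) (\<lambda>j. n + 1 - j) x"

locale regular_dominant =
  fixes n :: nat and v :: vec0
  assumes positive: "j \<in> {1..n} \<Longrightarrow> 0 < v j"
    and strictly_decreasing: "1 \<le> i \<Longrightarrow> i < j \<Longrightarrow> j \<le> n \<Longrightarrow> v j < v i"
    and outside: "j \<notin> {1..n} \<Longrightarrow> v j = 0"
begin

lemma inj_on_v: "inj_on v {1..n}"
  by (rule linorder_inj_onI') (use strictly_decreasing in fastforce)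

lemma comp_less_of_le:
  assumes "inj_on \<pi> {1..n}" "\<pi> ` {1..n} \<subseteq> {1..n}" "a \<in> {1..n}" "b \<in> {1..n}" "a \<noteq> b"
    and "v (\<pi> b) \<le> v (\<pi> a)"
  shows "\<pi> a < \<pi> b"
proof -
  have "\<pi> a \<noteq> \<pi> b" using assms(1,3-5) by (meson inj_on_contraD)
  moreover have "\<not> \<pi> b < \<pi> a"
    using strictly_decreasing[of "\<pi> b" "\<pi> a"] assms(2-4,6) by fastforce
  ultimately show ?thesis by simp
qed

lemma signed_perm_apply_inj:
  assumes "u1 \<in> signed_perms n E" "u2 \<in> signed_perms n E" "E \<subseteq> {-1, 1}" "u1 v = u2 v"
  shows "u1 = u2"
proof -
  obtain \<epsilon>1 \<pi>1 where p1: "bij_betw \<pi>1 {1..n} {1..n}" and s1: "range \<epsilon>1 \<subseteq> E"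
    and u1: "u1 = signed_perm n \<epsilon>1 \<pi>1"
    using assms(1) by (rule signed_permsE)
  obtain \<epsilon>2 \<pi>2 where p2: "bij_betw \<pi>2 {1..n} {1..n}" and s2: "range \<epsilon>2 \<subseteq> E"
    and u2: "u2 = signed_perm n \<epsilon>2 \<pi>2"
    using assms(2) by (rule signed_permsE)
  have "\<epsilon>1 j = \<epsilon>2 j \<and> \<pi>1 j = \<pi>2 j" if j: "j \<in> {1..n}" for j
  proof -
    have eq: "\<epsilon>1 j * v (\<pi>1 j) = \<epsilon>2 j * v (\<pi>2 j)"
      using fun_cong[OF assms(4), of j] j unfolding u1 u2 signed_perm_def by simp
    have "\<pi>1 j \<in> {1..n}" "\<pi>2 j \<in> {1..n}"
      using p1 p2 j by (auto dest: bij_betwE)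
    then have "v (\<pi>1 j) > 0" "v (\<pi>2 j) > 0" by (auto intro: positive)
    moreover have "\<epsilon>1 j \<in> {-1, 1}" "\<epsilon>2 j \<in> {-1, 1}" using s1 s2 assms(3) by auto
    ultimately have "\<epsilon>1 j = \<epsilon>2 j" "v (\<pi>1 j) = v (\<pi>2 j)" using eq by auto
    with \<open>\<pi>1 j \<in> {1..n}\<close> \<open>\<pi>2 j \<in> {1..n}\<close> show ?thesis using inj_on_v by (auto dest: inj_onD)
  qed
  then show ?thesis unfolding u1 u2 signed_perm_def by (auto simp: fun_eq_iff)
qed

lemma signed_perm_dominant_fixes:
  assumes "u \<in> signed_perms n E" "E \<subseteq> {-1, 1}"
    and dominant: "\<And>k. 1 \<le> k \<Longrightarrow> k < n \<Longrightarrow> u v (Suc k) \<le> u v k" "0 \<le> u v n"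
  shows "u v = v"
proof -
  obtain \<epsilon> \<pi> where perm: "bij_betw \<pi> {1..n} {1..n}" and signs: "range \<epsilon> \<subseteq> E"
    and u: "u = signed_perm n \<epsilon> \<pi>"
    using assms(1) by (rule signed_permsE)
  have maps: "\<pi> ` {1..n} \<subseteq> {1..n}" and inj: "inj_on \<pi> {1..n}"
    using perm by (auto simp: bij_betw_def)
  have uv: "u v j = \<epsilon> j * v (\<pi> j)" if "j \<in> {1..n}" for j
    using that unfolding u signed_perm_def by simp
  have plus: "\<epsilon> j = 1" if j: "j \<in> {1..n}" for j
  proof -
    have "u v n \<le> u v j"
      using lift_Suc_antimono_le_ivl[of "{1..<n}" "u v" j n] dominant(1) j by fastforce
    moreover have "\<pi> j \<in> {1..n}" using maps j by (auto simp: image_subset_iff)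
    then have "v (\<pi> j) > 0" by (rule positive)
    moreover have "\<epsilon> j \<in> {-1, 1}" using signs assms(2) by auto
    ultimately show ?thesis using uv[OF j] dominant(2) by (auto simp: mult_less_0_iff)
  qed
  have "\<pi> k < \<pi> (Suc k)" if "1 \<le> k" "k < n" for k
    using comp_less_of_le[OF inj maps, of k "Suc k"] dominant(1)[OF that] uv plus that by simp
  then have "\<pi> j = j" if "j \<in> {1..n}" for j
    using strict_mono_self_map_eq_id[OF maps] that by blast
  then show ?thesis using plus unfolding u signed_perm_def by (auto simp: fun_eq_iff)
qed

lemma signed_perm_antidominant:
  assumes "u \<in> signed_perms n {-1, 1}"
    and antidominant: "\<And>k. 1 \<le> k \<Longrightarrow> k < n \<Longrightarrow> u v k \<le> u v (Suc k)" "u v n \<le> 0"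
  shows "u v = (\<lambda>j. - v j)"
proof -
  obtain \<epsilon> \<pi> where perm: "bij_betw \<pi> {1..n} {1..n}" and signs: "range \<epsilon> \<subseteq> {-1, 1}"
    and u: "u = signed_perm n \<epsilon> \<pi>"
    using assms(1) by (rule signed_permsE)
  let ?u' = "signed_perm n (\<lambda>j. - \<epsilon> j) \<pi>"
  have u': "?u' x = (\<lambda>j. if j \<in> {1..n} then - u x j else x j)" for x
    unfolding u signed_perm_def by auto
  have "?u' v = v"
  proof (rule signed_perm_dominant_fixes[where E = "{-1, 1}"])
    show "?u' \<in> signed_perms n {-1, 1}"
      using perm signs unfolding signed_perms_def by fastforce
    show "0 \<le> ?u' v n"
      unfolding u' using antidominant(2) outside by (cases "n = 0") auto
  qed (use antidominant(1) in \<open>auto simp: u'\<close>)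
  show ?thesis
  proof
    fix j
    show "u v j = - v j"
    proof (cases "j \<in> {1..n}")
      case True
      then show ?thesis using fun_cong[OF \<open>?u' v = v\<close>, of j] by (simp add: u')
    next
      case False
      then show ?thesis using outside[OF False] by (simp add: u signed_perm_outside)
    qed
  qed
qed

lemma perm_antidominant:
  assumes "u \<in> signed_perms n {1}"
    and antidominant: "\<And>k. 1 \<le> k \<Longrightarrow> k < n \<Longrightarrow> u v k \<le> u v (Suc k)"
  shows "u v = rev_coords n v"
proof -
  obtain \<epsilon> \<pi> where perm: "bij_betw \<pi> {1..n} {1..n}" and signs: "range \<epsilon> \<subseteq> {1}"
    and u: "u = signed_perm n \<epsilon> \<pi>"
    using assms(1) by (rule signed_permsE)
  have maps: "\<pi> ` {1..n} \<subseteq> {1..n}" and inj: "inj_on \<pi> {1..n}"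
    using perm by (auto simp: bij_betw_def)
  have uv: "u v j = v (\<pi> j)" if "j \<in> {1..n}" for j
    using that signs unfolding u signed_perm_def by auto
  have "\<pi> (Suc k) < \<pi> k" if "1 \<le> k" "k < n" for k
    using comp_less_of_le[OF inj maps, of "Suc k" k] antidominant[OF that] uv that by simp
  then have "\<pi> j = n + 1 - j" if "j \<in> {1..n}" for j
    using strict_antimono_self_map_eq_rev[OF maps] that by blast
  then show ?thesis using signs unfolding u rev_coords_def signed_perm_def by (auto simp: fun_eq_iff)
qed

end

section \<open>Inversions and the longest element\<close>

datatype root = EpsDiff nat nat | EpsSum nat nat | EpsTwice nat

fun root_val :: "root \<Rightarrow> vec0 \<Rightarrow> real" where
  "root_val (EpsDiff i j) x = x i - x j"
| "root_val (EpsSum i j) x = x i + x j"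
| "root_val (EpsTwice i) x = 2 * x i"

definition inversions :: "root set \<Rightarrow> vec0 \<Rightarrow> nat" where
  "inversions P x = card {\<beta> \<in> P. root_val \<beta> x < 0}"

lemma inversions_le_card: "finite P \<Longrightarrow> inversions P x \<le> card P"
  unfolding inversions_def by (rule card_mono) auto

lemma inversions_reflect:
  assumes "finite P" "\<alpha> \<in> P"
    and f_maps: "\<And>\<beta>. \<beta> \<in> P - {\<alpha>} \<Longrightarrow> f \<beta> \<in> P - {\<alpha>}"
    and f_involutive: "\<And>\<beta>. \<beta> \<in> P - {\<alpha>} \<Longrightarrow> f (f \<beta>) = \<beta>"
    and f_compat: "\<And>\<beta>. \<beta> \<in> P - {\<alpha>} \<Longrightarrow> root_val \<beta> y = root_val (f \<beta>) x"
    and flip: "root_val \<alpha> y = - root_val \<alpha> x"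
  shows "inversions P y + (if root_val \<alpha> x < 0 then 1 else 0)
       = inversions P x + (if 0 < root_val \<alpha> x then 1 else 0)"
proof -
  define Q where "Q = P - {\<alpha>}"
  have split: "inversions P z = card {\<beta> \<in> Q. root_val \<beta> z < 0} + (if root_val \<alpha> z < 0 then 1 else 0)"
    for z
  proof -
    have "{\<beta> \<in> P. root_val \<beta> z < 0}
        = {\<beta> \<in> Q. root_val \<beta> z < 0} \<union> (if root_val \<alpha> z < 0 then {\<alpha>} else {})"
      using assms(2) by (auto simp: Q_def)
    then show ?thesis
      unfolding inversions_def using assms(1) by (simp add: Q_def card_insert_if)
  qed
  have "bij_betw f {\<beta> \<in> Q. root_val (f \<beta>) x < 0} {\<gamma> \<in> Q. root_val \<gamma> x < 0}"
    by (rule bij_betw_byWitness[where f' = f]) (use f_maps f_involutive in \<open>auto simp: Q_def\<close>)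
  moreover have "{\<beta> \<in> Q. root_val \<beta> y < 0} = {\<beta> \<in> Q. root_val (f \<beta>) x < 0}"
    using f_compat by (auto simp: Q_def)
  ultimately have "card {\<beta> \<in> Q. root_val \<beta> y < 0} = card {\<gamma> \<in> Q. root_val \<gamma> x < 0}"
    by (simp add: bij_betw_same_card)
  then show ?thesis using split[of y] split[of x] flip by auto
qed

locale inversion_count =
  fixes n :: nat and I :: "nat set" and P :: "root set" and simple :: "nat \<Rightarrow> root"
    and v t :: vec0
  assumes index_set: "I \<subseteq> {1..n}"
    and finite_roots: "finite P"
    and simple_in_roots: "k \<in> I \<Longrightarrow> simple k \<in> P"
    and inversions_srefl: "k \<in> I \<Longrightarrow> inversions P (srefl n k x) + (if root_val (simple k) x < 0 then 1 else 0)
                                      = inversions P x + (if 0 < root_val (simple k) x then 1 else 0)"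
    and no_inversions: "inversions P v = 0"
    and dominant_fixed:
      "w \<in> gen n I \<Longrightarrow> (\<And>k. k \<in> I \<Longrightarrow> 0 \<le> root_val (simple k) (w v)) \<Longrightarrow> w v = v"
    and antidominant_value:
      "w \<in> gen n I \<Longrightarrow> (\<And>k. k \<in> I \<Longrightarrow> root_val (simple k) (w v) \<le> 0) \<Longrightarrow> w v = t"
    and orbit_inj: "w1 \<in> gen n I \<Longrightarrow> w2 \<in> gen n I \<Longrightarrow> w1 v = w2 v \<Longrightarrow> w1 = w2"
begin

lemma inversions_wordprod_le: "set ws \<subseteq> I \<Longrightarrow> inversions P (wordprod n ws v) \<le> length ws"
proof (induction ws)
  case Nil
  then show ?case using no_inversions by (simp add: wordprod_Nil)
next
  case (Cons k ws)
  then have "inversions P (srefl n k (wordprod n ws v)) \<le> Suc (inversions P (wordprod n ws v))"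
    using inversions_srefl[of k "wordprod n ws v"] by (auto split: if_splits)
  then show ?case using Cons by (simp add: wordprod_Cons)
qed

lemma reduced_word_exists:
  "w \<in> gen n I \<Longrightarrow> \<exists>ws. set ws \<subseteq> I \<and> length ws = inversions P (w v) \<and> wordprod n ws = w"
proof (induction "inversions P (w v)" arbitrary: w)
  case 0
  have "w v = v"
  proof (rule dominant_fixed[OF 0(2)])
    fix k assume "k \<in> I"
    then have "simple k \<notin> {\<beta> \<in> P. root_val \<beta> (w v) < 0}"
      using 0(1)[symmetric] finite_roots by (simp add: inversions_def)
    then show "0 \<le> root_val (simple k) (w v)" using simple_in_roots[OF \<open>k \<in> I\<close>] by simp
  qed
  then have "w = id" using orbit_inj[OF 0(2) id_in_gen] by simp
  then show ?case using 0(1) by (intro exI[of _ "[]"]) (simp add: wordprod_Nil)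
next
  case (Suc m)
  have "\<not> (\<forall>k \<in> I. 0 \<le> root_val (simple k) (w v))"
  proof
    assume "\<forall>k \<in> I. 0 \<le> root_val (simple k) (w v)"
    then have "w v = v" using dominant_fixed[OF Suc(3)] by blast
    then show False using Suc(2) no_inversions by simp
  qed
  then obtain k where k: "k \<in> I" "root_val (simple k) (w v) < 0" by (auto simp: not_le)
  have "inversions P ((srefl n k \<circ> w) v) = m"
    using inversions_srefl[OF k(1), of "w v"] k(2) Suc(2) by simp
  then obtain ws where ws: "set ws \<subseteq> I" "length ws = m" "wordprod n ws = srefl n k \<circ> w"
    using Suc(1) srefl_comp_in_gen[OF k(1) Suc(3)] by metis
  have "wordprod n (k # ws) = w"
    using k(1) index_set srefl_involutive by (auto simp: wordprod_Cons ws(3) fun_eq_iff)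
  then show ?case using ws k(1) Suc(2) by (intro exI[of _ "k # ws"]) simp
qed

lemma wlen_eq_inversions: "w \<in> gen n I \<Longrightarrow> wlen n I w = inversions P (w v)"
  unfolding wlen_def
proof (rule Least_equality)
  assume "w \<in> gen n I"
  then show "\<exists>ws. set ws \<subseteq> I \<and> length ws = inversions P (w v) \<and> wordprod n ws = w"
    by (rule reduced_word_exists)
next
  fix l assume "\<exists>ws. set ws \<subseteq> I \<and> length ws = l \<and> wordprod n ws = w"
  then show "inversions P (w v) \<le> l" using inversions_wordprod_le by blast
qed

lemma maximal_inversions_antidominant:
  assumes "c \<in> gen n I" and maximal: "\<And>w. w \<in> gen n I \<Longrightarrow> inversions P (w v) \<le> inversions P (c v)"
  shows "c v = t"
proof (rule antidominant_value[OF assms(1)])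
  fix k assume k: "k \<in> I"
  show "root_val (simple k) (c v) \<le> 0"
  proof (rule ccontr)
    assume "\<not> root_val (simple k) (c v) \<le> 0"
    then have "inversions P ((srefl n k \<circ> c) v) = Suc (inversions P (c v))"
      using inversions_srefl[OF k, of "c v"] by simp
    then show False using maximal[OF srefl_comp_in_gen[OF k assms(1)]] by simp
  qed
qed

lemma longest_apply: "longest n I \<in> gen n I" "longest n I v = t"
proof -
  obtain c where c: "c \<in> gen n I" and maximal: "\<And>w. w \<in> gen n I \<Longrightarrow> inversions P (w v) \<le> inversions P (c v)"
    using ex_has_greatest_nat[of "\<lambda>w. w \<in> gen n I" id "\<lambda>w. inversions P (w v)" "Suc (card P)"]
      id_in_gen inversions_le_card[OF finite_roots] by (metis le_imp_less_Suc)
  have ct: "c v = t" by (rule maximal_inversions_antidominant[OF c]) (rule maximal)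
  have "longest n I = c"
    unfolding longest_def
  proof (rule the_equality)
    show "c \<in> gen n I \<and> (\<forall>u \<in> gen n I. wlen n I u \<le> wlen n I c)"
      using c maximal wlen_eq_inversions by simp
  next
    fix w assume w: "w \<in> gen n I \<and> (\<forall>u \<in> gen n I. wlen n I u \<le> wlen n I w)"
    then have "\<And>u. u \<in> gen n I \<Longrightarrow> inversions P (u v) \<le> inversions P (w v)"
      using wlen_eq_inversions by auto
    then have "w v = t" using w by (intro maximal_inversions_antidominant) auto
    then show "w = c" using orbit_inj w c ct by auto
  qed
  then show "longest n I \<in> gen n I" "longest n I v = t" using c ct by simp_all
qed

end

definition pos_roots_A :: "nat \<Rightarrow> root set" where
  "pos_roots_A n = {EpsDiff i j | i j. 1 \<le> i \<and> i < j \<and> j \<le> n}"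

definition pos_roots_C :: "nat \<Rightarrow> root set" where
  "pos_roots_C n = pos_roots_A n \<union> {EpsSum i j | i j. 1 \<le> i \<and> i < j \<and> j \<le> n}
     \<union> {EpsTwice i | i. i \<in> {1..n}}"

definition simple_root_C :: "nat \<Rightarrow> nat \<Rightarrow> root" where
  "simple_root_C n k = (if k < n then EpsDiff k (Suc k) else EpsTwice n)"

lemma finite_pos_roots_C: "finite (pos_roots_C n)"
proof -
  have "pos_roots_C n \<subseteq> case_prod EpsDiff ` ({1..n} \<times> {1..n}) \<union> case_prod EpsSum ` ({1..n} \<times> {1..n})
      \<union> EpsTwice ` {1..n}"
    unfolding pos_roots_C_def pos_roots_A_def by force
  then show ?thesis by (rule finite_subset) simp
qed

lemma finite_pos_roots_A: "finite (pos_roots_A n)"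
  using finite_pos_roots_C by (rule finite_subset[rotated]) (auto simp: pos_roots_C_def)

fun root_swap :: "nat \<Rightarrow> root \<Rightarrow> root" where
  "root_swap k (EpsDiff i j) = EpsDiff (swap_adj k i) (swap_adj k j)"
| "root_swap k (EpsSum i j) = EpsSum (min (swap_adj k i) (swap_adj k j)) (max (swap_adj k i) (swap_adj k j))"
| "root_swap k (EpsTwice i) = EpsTwice (swap_adj k i)"

fun root_negate :: "nat \<Rightarrow> root \<Rightarrow> root" where
  "root_negate n (EpsDiff i j) = (if j = n then EpsSum i j else EpsDiff i j)"
| "root_negate n (EpsSum i j) = (if j = n then EpsDiff i j else EpsSum i j)"
| "root_negate n (EpsTwice i) = EpsTwice i"

lemma inversions_A_swap:
  assumes "1 \<le> k" "k < n"
  shows "inversions (pos_roots_A n) (x \<circ> swap_adj k) + (if root_val (EpsDiff k (Suc k)) x < 0 then 1 else 0)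
       = inversions (pos_roots_A n) x + (if 0 < root_val (EpsDiff k (Suc k)) x then 1 else 0)"
proof (rule inversions_reflect[where f = "root_swap k"])
  show "EpsDiff k (Suc k) \<in> pos_roots_A n" using assms unfolding pos_roots_A_def by auto
  show "root_swap k \<beta> \<in> pos_roots_A n - {EpsDiff k (Suc k)}" if "\<beta> \<in> pos_roots_A n - {EpsDiff k (Suc k)}" for \<beta>
    using that assms unfolding pos_roots_A_def by (auto simp: transpose_def split: if_splits)
  show "root_swap k (root_swap k \<beta>) = \<beta>" if "\<beta> \<in> pos_roots_A n - {EpsDiff k (Suc k)}" for \<beta>
    using that unfolding pos_roots_A_def by auto
  show "root_val \<beta> (x \<circ> swap_adj k) = root_val (root_swap k \<beta>) x" if "\<beta> \<in> pos_roots_A n - {EpsDiff k (Suc k)}" for \<beta>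
    using that unfolding pos_roots_A_def by auto
qed (simp_all add: finite_pos_roots_A)

lemma inversions_C_swap:
  assumes "1 \<le> k" "k < n"
  shows "inversions (pos_roots_C n) (x \<circ> swap_adj k) + (if root_val (EpsDiff k (Suc k)) x < 0 then 1 else 0)
       = inversions (pos_roots_C n) x + (if 0 < root_val (EpsDiff k (Suc k)) x then 1 else 0)"
proof (rule inversions_reflect[where f = "root_swap k"])
  show "EpsDiff k (Suc k) \<in> pos_roots_C n" using assms unfolding pos_roots_C_def pos_roots_A_def by auto
  show "root_swap k \<beta> \<in> pos_roots_C n - {EpsDiff k (Suc k)}" if "\<beta> \<in> pos_roots_C n - {EpsDiff k (Suc k)}" for \<beta>
    using that assms unfolding pos_roots_C_def pos_roots_A_def
    by (auto simp: transpose_def min_def max_def split: if_splits)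
  show "root_swap k (root_swap k \<beta>) = \<beta>" if "\<beta> \<in> pos_roots_C n - {EpsDiff k (Suc k)}" for \<beta>
    using that unfolding pos_roots_C_def pos_roots_A_def
    by (auto simp: transpose_def min_def max_def split: if_splits)
  show "root_val \<beta> (x \<circ> swap_adj k) = root_val (root_swap k \<beta>) x" if "\<beta> \<in> pos_roots_C n - {EpsDiff k (Suc k)}" for \<beta>
    using that unfolding pos_roots_C_def pos_roots_A_def by (auto simp: min_def max_def)
qed (simp_all add: finite_pos_roots_C)

lemma inversions_C_negate:
  assumes "1 \<le> n"
  shows "inversions (pos_roots_C n) (x(n := - x n)) + (if root_val (EpsTwice n) x < 0 then 1 else 0)
       = inversions (pos_roots_C n) x + (if 0 < root_val (EpsTwice n) x then 1 else 0)"
proof (rule inversions_reflect[where f = "root_negate n"])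
  show "EpsTwice n \<in> pos_roots_C n" using assms unfolding pos_roots_C_def by auto
  show "root_negate n \<beta> \<in> pos_roots_C n - {EpsTwice n}" if "\<beta> \<in> pos_roots_C n - {EpsTwice n}" for \<beta>
    using that assms unfolding pos_roots_C_def pos_roots_A_def by (auto split: if_splits)
  show "root_negate n (root_negate n \<beta>) = \<beta>" if "\<beta> \<in> pos_roots_C n - {EpsTwice n}" for \<beta>
    using that unfolding pos_roots_C_def pos_roots_A_def by auto
  show "root_val \<beta> (x(n := - x n)) = root_val (root_negate n \<beta>) x" if "\<beta> \<in> pos_roots_C n - {EpsTwice n}" for \<beta>
    using that unfolding pos_roots_C_def pos_roots_A_def by (auto split: if_splits)
qed (simp_all add: finite_pos_roots_C)

lemma inversions_C_srefl:
  assumes "k \<in> {1..n}"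
  shows "inversions (pos_roots_C n) (srefl n k x) + (if root_val (simple_root_C n k) x < 0 then 1 else 0)
       = inversions (pos_roots_C n) x + (if 0 < root_val (simple_root_C n k) x then 1 else 0)"
proof (cases "k < n")
  case True
  then show ?thesis
    using assms inversions_C_swap[of k n x] by (simp add: srefl_eq_swap simple_root_C_def)
next
  case False
  then have "k = n" using assms by simp
  then show ?thesis
    using assms inversions_C_negate[of n x] by (simp add: srefl_eq_negate simple_root_C_def)
qed

context regular_dominant
begin

lemma no_inversions_C: "inversions (pos_roots_C n) v = 0"
proof -
  have pos: "0 < v i" if "1 \<le> i" "i \<le> n" for i using that positive by simp
  have "0 < root_val \<beta> v" if "\<beta> \<in> pos_roots_C n" for \<beta>
    using that strictly_decreasing by (fastforce simp: pos_roots_C_def pos_roots_A_def intro!: add_pos_pos pos)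
  then have "{\<beta> \<in> pos_roots_C n. root_val \<beta> v < 0} = {}" by fastforce
  then show ?thesis unfolding inversions_def by (simp only: card.empty)
qed

lemma no_inversions_A: "inversions (pos_roots_A n) v = 0"
proof -
  have "{\<beta> \<in> pos_roots_A n. root_val \<beta> v < 0} = {}"
    using strictly_decreasing by (fastforce simp: pos_roots_A_def)
  then show ?thesis unfolding inversions_def by (simp only: card.empty)
qed

lemma perm_apply_nonneg:
  assumes "u \<in> signed_perms n {1}"
  shows "0 \<le> u v j"
proof -
  obtain \<epsilon> \<pi> where perm: "bij_betw \<pi> {1..n} {1..n}" and signs: "range \<epsilon> \<subseteq> {1}"
    and u: "u = signed_perm n \<epsilon> \<pi>"
    using assms by (rule signed_permsE)
  show ?thesis
  proof (cases "j \<in> {1..n}")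
    case True
    then have "\<pi> j \<in> {1..n}" using perm by (auto dest: bij_betwE)
    then show ?thesis
      using True subsetD[OF signs rangeI, of j] positive[of "\<pi> j"] by (auto simp: u signed_perm_def)
  qed (simp add: u signed_perm_outside outside)
qed

sublocale C: inversion_count n "{1..n}" "pos_roots_C n" "simple_root_C n" v "\<lambda>j. - v j"
proof
  have gen: "gen n {1..n} \<subseteq> signed_perms n {-1, 1}"
    using W0_subset_signed_perms by (simp add: W0_def)
  show "inversions (pos_roots_C n) (srefl n k x) + (if root_val (simple_root_C n k) x < 0 then 1 else 0)
      = inversions (pos_roots_C n) x + (if 0 < root_val (simple_root_C n k) x then 1 else 0)"
    if "k \<in> {1..n}" for k x
    using that by (rule inversions_C_srefl)
  show "w v = v" if w: "w \<in> gen n {1..n}"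
    and dominant: "\<And>k. k \<in> {1..n} \<Longrightarrow> 0 \<le> root_val (simple_root_C n k) (w v)" for w
  proof (rule signed_perm_dominant_fixes[where E = "{-1, 1}"])
    show "w v (Suc k) \<le> w v k" if "1 \<le> k" "k < n" for k
      using that dominant[of k] by (simp add: simple_root_C_def)
    show "0 \<le> w v n"
      using dominant[of n] signed_perms_outside[of w n _ 0 v] w gen outside[of 0]
      by (cases "n = 0") (auto simp: simple_root_C_def)
  qed (use w gen in auto)
  show "w v = (\<lambda>j. - v j)" if w: "w \<in> gen n {1..n}"
    and antidominant: "\<And>k. k \<in> {1..n} \<Longrightarrow> root_val (simple_root_C n k) (w v) \<le> 0" for w
  proof (rule signed_perm_antidominant)
    show "w v k \<le> w v (Suc k)" if "1 \<le> k" "k < n" for k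
      using that antidominant[of k] by (simp add: simple_root_C_def)
    show "w v n \<le> 0"
      using antidominant[of n] signed_perms_outside[of w n _ 0 v] w gen outside[of 0]
      by (cases "n = 0") (auto simp: simple_root_C_def)
  qed (use w gen in auto)
  show "w1 = w2" if "w1 \<in> gen n {1..n}" "w2 \<in> gen n {1..n}" "w1 v = w2 v" for w1 w2
    using that gen by (intro signed_perm_apply_inj[where E = "{-1, 1}"]) auto
  show "simple_root_C n k \<in> pos_roots_C n" if "k \<in> {1..n}" for k
    using that by (auto simp: simple_root_C_def pos_roots_C_def pos_roots_A_def)
qed (simp_all add: finite_pos_roots_C no_inversions_C)

sublocale A: inversion_count n "{1..n-1}" "pos_roots_A n" "\<lambda>k. EpsDiff k (Suc k)" v "rev_coords n v"
proof
  note gen = gen_A_subset_signed_perms[of n]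
  show "inversions (pos_roots_A n) (srefl n k x) + (if root_val (EpsDiff k (Suc k)) x < 0 then 1 else 0)
      = inversions (pos_roots_A n) x + (if 0 < root_val (EpsDiff k (Suc k)) x then 1 else 0)"
    if "k \<in> {1..n-1}" for k x
  proof -
    have "1 \<le> k" "k < n" using that by auto
    then show ?thesis using inversions_A_swap[of k n x] by (simp only: srefl_eq_swap)
  qed
  show "w v = v" if w: "w \<in> gen n {1..n-1}"
    and dominant: "\<And>k. k \<in> {1..n-1} \<Longrightarrow> 0 \<le> root_val (EpsDiff k (Suc k)) (w v)" for w
  proof (rule signed_perm_dominant_fixes[where E = "{1}"])
    show "w v (Suc k) \<le> w v k" if "1 \<le> k" "k < n" for k
      using that dominant[of k] by simp
  qed (use w gen perm_apply_nonneg in auto)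
  show "w v = rev_coords n v" if w: "w \<in> gen n {1..n-1}"
    and antidominant: "\<And>k. k \<in> {1..n-1} \<Longrightarrow> root_val (EpsDiff k (Suc k)) (w v) \<le> 0" for w
  proof (rule perm_antidominant)
    show "w v k \<le> w v (Suc k)" if "1 \<le> k" "k < n" for k
      using that antidominant[of k] by simp
  qed (use w gen in auto)
  show "w1 = w2" if "w1 \<in> gen n {1..n-1}" "w2 \<in> gen n {1..n-1}" "w1 v = w2 v" for w1 w2
    using that gen by (intro signed_perm_apply_inj[where E = "{1}"]) auto
  show "EpsDiff k (Suc k) \<in> pos_roots_A n" if "k \<in> {1..n-1}" for k
    using that by (auto simp: pos_roots_A_def)
qed (auto simp: finite_pos_roots_A no_inversions_A)

lemma w0_apply: "w0 n \<in> W0 n" "w0 n v = (\<lambda>j. - v j)"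
  unfolding w0_def W0_def by (fact C.longest_apply)+

lemma w0n_apply: "w0n n \<in> gen n {1..n-1}" "w0n n v = rev_coords n v"
  unfolding w0n_def by (fact A.longest_apply)+

end

section \<open>The pairing with rho-vee\<close>

definition rho_vec :: "nat \<Rightarrow> vec0" where
  "rho_vec n = (\<lambda>j. if j \<in> {1..n} then (2 * real n - 2 * real j + 1) / sqrt 2 else 0)"

lemma regular_dominant_rho_vec: "regular_dominant n (rho_vec n)"
  by unfold_locales (auto simp: rho_vec_def divide_strict_right_mono)

locale rho_vee_pairing =
  fixes n :: nat and rho :: "hstar \<Rightarrow> real"
  assumes rho_hadd: "rho (hadd u v) = rho u + rho v"
    and rho_hscale: "rho (hscale t u) = t * rho u"
    and rho_aroot: "i \<in> {0..n} \<Longrightarrow> rho (aroot n i) = 1"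
    and n_pos: "1 \<le> n"
begin

lemma rho_vadd: "rho (vadd x y, 0, 0) = rho (x, 0, 0) + rho (y, 0, 0)"
  using rho_hadd[of "(x, 0, 0)" "(y, 0, 0)"] by (simp add: hadd_def)

lemma rho_vscale: "rho (vscale c x, 0, 0) = c * rho (x, 0, 0)"
  using rho_hscale[of c "(x, 0, 0)"] by (simp add: hscale_def)

lemma rho_uminus: "rho ((\<lambda>j. - x j), 0, 0) = - rho (x, 0, 0)"
  using rho_vscale[of "-1" x] by (simp add: vscale_def)

lemma rho_finite_part: "rho (x, 0, c) = rho (x, 0, 0) + c * rho delta"
proof -
  have "hadd (x, 0, 0) (hscale c delta) = (x, 0, c)"
    by (simp add: hadd_def hscale_def delta_def vadd_def vscale_def)
  then show ?thesis using rho_hadd[of "(x, 0, 0)" "hscale c delta"] rho_hscale[of c delta] by simp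
qed

lemma rho_sum: "rho ((\<lambda>j. \<Sum>k=1..(m::nat). f k j), 0, 0) = (\<Sum>k=1..m. rho (f k, 0, 0))"
proof (induction m)
  case 0
  then show ?case using rho_vscale[of 0 "\<lambda>_. 0"] by (simp add: vscale_def)
next
  case (Suc m)
  have "(\<lambda>j. \<Sum>k=1..Suc m. f k j) = vadd (\<lambda>j. \<Sum>k=1..m. f k j) (f (Suc m))"
    by (simp add: vadd_def fun_eq_iff)
  then show ?case using rho_vadd Suc by simp
qed

lemma rho_froot: "k \<in> {1..n} \<Longrightarrow> rho (froot n k, 0, 0) = 1"
  using rho_aroot[of k] by (simp add: aroot_def)

lemma rho_eps_Suc:
  assumes "1 \<le> k" "k < n"
  shows "rho (eps k, 0, 0) = rho (eps (Suc k), 0, 0) + sqrt 2"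
proof -
  have "froot n k = vscale (1 / sqrt 2) (vadd (eps k) (vscale (-1) (eps (Suc k))))"
    using assms by (simp add: froot_def vsub_def vadd_def vscale_def)
  then have "rho (froot n k, 0, 0) = (1 / sqrt 2) * (rho (eps k, 0, 0) - rho (eps (Suc k), 0, 0))"
    by (simp add: rho_vscale rho_vadd)
  moreover have "rho (froot n k, 0, 0) = 1" using rho_froot assms by simp
  ultimately have "(1 / sqrt 2) * (rho (eps k, 0, 0) - rho (eps (Suc k), 0, 0)) = 1" by linarith
  then show ?thesis by (simp add: field_simps)
qed

lemma rho_eps_n: "rho (eps n, 0, 0) = 1 / sqrt 2"
proof -
  have "rho (froot n n, 0, 0) = sqrt 2 * rho (eps n, 0, 0)"
    by (simp add: froot_def rho_vscale)
  moreover have "rho (froot n n, 0, 0) = 1" using rho_froot n_pos by simp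
  ultimately have "sqrt 2 * rho (eps n, 0, 0) = 1" by linarith
  then show ?thesis by (simp add: field_simps)
qed

lemma rho_eps: "j \<in> {1..n} \<Longrightarrow> rho (eps j, 0, 0) = rho_vec n j"
proof (induction "n - j" arbitrary: j)
  case 0
  then have "j = n" by simp
  then show ?case using rho_eps_n n_pos by (simp add: rho_vec_def)
next
  case (Suc d)
  then have "rho (eps j, 0, 0) = rho_vec n (Suc j) + sqrt 2"
    using rho_eps_Suc[of j] by simp
  also have "\<dots> = rho_vec n j"
    using Suc.prems Suc.hyps(2) by (simp add: rho_vec_def field_simps real_div_sqrt)
  finally show ?case .
qed

lemma rho_V0:
  assumes "\<forall>j. j \<notin> {1..n} \<longrightarrow> x j = 0"
  shows "rho (x, 0, 0) = dot n x (rho_vec n)"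
proof -
  have "x = (\<lambda>j. \<Sum>k=1..n. vscale (x k) (eps k) j)"
  proof
    fix j
    have "(\<Sum>k=1..n. vscale (x k) (eps k) j) = (\<Sum>k=1..n. if k = j then x j else 0)"
      by (intro sum.cong) (auto simp: vscale_def eps_def)
    then show "x j = (\<Sum>k=1..n. vscale (x k) (eps k) j)" using assms by auto
  qed
  then have "rho (x, 0, 0) = (\<Sum>k=1..n. rho (vscale (x k) (eps k), 0, 0))"
    using rho_sum[of "\<lambda>k. vscale (x k) (eps k)" n] by simp
  also have "\<dots> = dot n x (rho_vec n)"
    unfolding dot_def using rho_vscale rho_eps by (intro sum.cong) auto
  finally show ?thesis .
qed

lemma rho_delta: "rho delta = 2 * real n"
proof -
  define X where "X = (\<lambda>j. \<Sum>k=1..n. vscale (marks n k) (froot n k) j)"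
  have "aroot n 0 = ((\<lambda>j. - X j), 0, 1)"
    by (simp add: aroot_def vscale_def X_def)
  then have "1 = - rho (X, 0, 0) + rho delta"
    using rho_aroot[of 0] rho_finite_part[of "\<lambda>j. - X j" 1] rho_uminus[of X] by simp
  moreover have "rho (X, 0, 0) = (\<Sum>k=1..n. rho (vscale (marks n k) (froot n k), 0, 0))"
    unfolding X_def by (rule rho_sum)
  moreover have "\<dots> = (\<Sum>k=1..n. 2 - (if k = n then 1 else 0))"
    using rho_vscale rho_froot by (intro sum.cong) (auto simp: marks_def)
  moreover have "\<dots> = 2 * real n - 1"
    using n_pos by (simp add: sum_subtractf)
  ultimately show ?thesis by linarith
qed

lemma LL_level_one:
  assumes "g Lambda0 = (q, 1, - (dot n q q / 2))" "\<forall>j. j \<notin> {1..n} \<longrightarrow> q j = 0"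
  shows "LL rho g = real n * dot n q q - dot n q (rho_vec n)"
proof -
  have "LL rho g = rho ((\<lambda>j. - q j), 0, dot n q q / 2)"
    unfolding LL_def assms(1) by (simp add: hsub_def Lambda0_def vsub_def)
  also have "\<dots> = - dot n q (rho_vec n) + dot n q q / 2 * (2 * real n)"
    using rho_finite_part[of "\<lambda>j. - q j"] rho_uminus[of q] rho_V0[OF assms(2)] rho_delta by simp
  finally show ?thesis by simp
qed

end

section \<open>The action of sigma_n on translations\<close>

lemma w0_signed_perm: "w0 n \<in> signed_perms n {-1, 1}"
  using regular_dominant.w0_apply(1)[OF regular_dominant_rho_vec] W0_subset_signed_perms by blast

lemma w0n_perm: "w0n n \<in> signed_perms n {1}"
  using regular_dominant.w0n_apply(1)[OF regular_dominant_rho_vec] gen_A_subset_signed_perms by blast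

lemma dot_w0n_w0: "dot n (w0n n (w0 n x)) (w0n n (w0 n y)) = dot n x y"
  using dot_signed_perm[OF w0n_perm] dot_signed_perm[OF w0_signed_perm] by simp

lemma Waff_apply_Lambda0:
  assumes "w \<in> Waff n"
  obtains q where "\<forall>j. j \<notin> {1..n} \<longrightarrow> q j = 0" "w Lambda0 = (q, 1, - (dot n q q / 2))"
proof -
  obtain q u where w: "w = transl n q \<circ> lift u" and "q \<in> Mlat n" and "u \<in> W0 n"
    using assms unfolding Waff_def by blast
  then have "\<forall>j. j \<notin> {1..n} \<longrightarrow> q j = 0" and "u (\<lambda>_. 0) = (\<lambda>_. 0)"
    using W0_subset_signed_perms signed_perms_zero unfolding Mlat_def by blast+
  moreover have "dot n (\<lambda>_. 0) q = 0" by (simp add: dot_def)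
  ultimately show ?thesis
    using that[of q] by (simp add: w Lambda0_def lift_def transl_def vadd_def vscale_def)
qed

(* sigma_n (t_q u) = t_(sigma_transl n q) (w_{0,n} w_0 u) *)
definition sigma_transl :: "nat \<Rightarrow> vec0 \<Rightarrow> vec0" where
  "sigma_transl n q = vadd (w0n n (w0 n q)) (omega_n n)"

lemma sigma_n_level_one:
  "sigma_n n (q, 1, - (dot n q q / 2))
     = (sigma_transl n q, 1, - (dot n (sigma_transl n q) (sigma_transl n q) / 2))"
proof -
  let ?g = "w0n n (w0 n q)" and ?\<omega> = "omega_n n"
  have "dot n (vadd ?g ?\<omega>) (vadd ?g ?\<omega>) = dot n q q + 2 * dot n ?g ?\<omega> + dot n ?\<omega> ?\<omega>"
    by (simp add: dot_vadd_left dot_vadd_right dot_w0n_w0 dot_commute[of n ?\<omega> ?g])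
  then show ?thesis
    by (simp add: sigma_n_def sigma_transl_def lift_def transl_def vscale_def field_simps)
qed

lemma w0n_w0_rho_vec: "w0n n (w0 n (rho_vec n)) = (\<lambda>j. rho_vec n j - 2 * real n * omega_n n j)"
proof -
  interpret regular_dominant n "rho_vec n" by (rule regular_dominant_rho_vec)
  have "w0n n (w0 n (rho_vec n)) = (\<lambda>j. - rev_coords n (rho_vec n) j)"
    using w0_apply(2) w0n_apply(2) signed_perms_uminus[OF w0n_perm] by simp
  also have "\<dots> = (\<lambda>j. rho_vec n j - 2 * real n * omega_n n j)"
  proof
    fix j
    show "- rev_coords n (rho_vec n) j = rho_vec n j - 2 * real n * omega_n n j"
    proof (cases "j \<in> {1..n}")
      case True
      then have "real (n + 1 - j) = real n + 1 - real j" by (simp add: of_nat_diff)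
      with True show ?thesis
        by (auto simp: rev_coords_def signed_perm_def rho_vec_def omega_n_def field_simps)
    next
      case False
      then show ?thesis by (auto simp: rev_coords_def signed_perm_def rho_vec_def omega_n_def)
    qed
  qed
  finally show ?thesis .
qed

lemma sigma_transl_support:
  assumes "\<forall>j. j \<notin> {1..n} \<longrightarrow> q j = 0"
  shows "\<forall>j. j \<notin> {1..n} \<longrightarrow> sigma_transl n q j = 0"
  using assms signed_perms_outside[OF w0_signed_perm] signed_perms_outside[OF w0n_perm]
  by (simp add: sigma_transl_def vadd_def omega_n_def)

lemma dot_omega_rho_vec: "dot n (omega_n n) (rho_vec n) = real n * real n / 2"
proof -
  have "dot n (omega_n n) (rho_vec n) = (\<Sum>j=1..n. (real n + 1/2) - real j)"
    unfolding dot_def omega_n_def rho_vec_def by (intro sum.cong) (auto simp: field_simps)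
  also have "\<dots> = real n * (real n + 1/2) - real n * (real n + 1) / 2"
  proof -
    have "(\<Sum>j=1..n. real j) = real n * (real n + 1) / 2"
      by (induction n) (simp_all add: field_simps)
    then show ?thesis by (simp add: sum_subtractf)
  qed
  finally show ?thesis by (simp add: field_simps)
qed

lemma dot_omega_omega: "dot n (omega_n n) (omega_n n) = real n / 2"
proof -
  have "dot n (omega_n n) (omega_n n) = (\<Sum>j=1..n. 1/2)"
    unfolding dot_def omega_n_def by (intro sum.cong) (auto simp: field_simps)
  then show ?thesis by simp
qed

lemma level_one_energy_sigma_transl:
  "real n * dot n (sigma_transl n q) (sigma_transl n q) - dot n (sigma_transl n q) (rho_vec n)
     = real n * dot n q q - dot n q (rho_vec n)"
proof -
  let ?g = "\<lambda>x. w0n n (w0 n x)" and ?\<omega> = "omega_n n" and ?\<rho> = "rho_vec n"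
  have "?\<rho> = vadd (?g ?\<rho>) (vscale (2 * real n) ?\<omega>)"
    by (simp add: w0n_w0_rho_vec vadd_def vscale_def)
  then have "dot n (?g q) ?\<rho> = dot n q ?\<rho> + 2 * real n * dot n (?g q) ?\<omega>"
    by (metis dot_vadd_right dot_vscale_right dot_w0n_w0)
  then show ?thesis
    by (simp add: sigma_transl_def dot_vadd_left dot_vadd_right dot_w0n_w0 dot_commute[of n ?\<omega> "?g q"]
        dot_omega_omega dot_omega_rho_vec algebra_simps)
qed

theorem theorem4p11:
  fixes n :: nat and rho :: "hstar \<Rightarrow> real" and w :: "hstar \<Rightarrow> hstar"
  assumes "n \<ge> 2"
    and "\<forall>u v. rho (hadd u v) = rho u + rho v"
    and "\<forall>t u. rho (hscale t u) = t * rho u"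
    and "\<forall>i \<in> {0..n}. rho (aroot n i) = 1"
    and "w \<in> Waff n"
  shows "LL rho (sigma_n n \<circ> w) = LL rho w"
proof -
  interpret rho_vee_pairing n rho using assms(1-4) by unfold_locales auto
  obtain q where q: "\<forall>j. j \<notin> {1..n} \<longrightarrow> q j = 0" "w Lambda0 = (q, 1, - (dot n q q / 2))"
    using Waff_apply_Lambda0[OF assms(5)] by blast
  have "(sigma_n n \<circ> w) Lambda0
      = (sigma_transl n q, 1, - (dot n (sigma_transl n q) (sigma_transl n q) / 2))"
    using q(2) sigma_n_level_one by simp
  then have "LL rho (sigma_n n \<circ> w)
      = real n * dot n (sigma_transl n q) (sigma_transl n q) - dot n (sigma_transl n q) (rho_vec n)"
    using sigma_transl_support[OF q(1)] by (rule LL_level_one)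
  also have "\<dots> = real n * dot n q q - dot n q (rho_vec n)"
    by (rule level_one_energy_sigma_transl)
  also have "\<dots> = LL rho w"
    using q by (simp add: LL_level_one)
  finally show ?thesis .
qed

end
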